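(* Let $\Delta$ be a saturated sample set. For every basic term $t$, every valuation $\theta$, and every $\Delta$-diagram $\delta$: if $\theta(x)$ strongly extends $\delta_x$ for every term variable $x$, then $[\![t]\!]_\theta$ strongly extends $\delta_t$.
   Context: Time warps: $\overline{\omega}=\omega\cup\{\omega\}$ with its natural order; a time warp is a monotone $f\colon\overline\omega\to\overline\omega$ with $f(0)=0$, $f(\omega)=\bigvee_{n\in\omega}f(n)$; $W$ is the set of time warps ordered pointwise, $fg:=f\circ g$, $\mathrm{id}$ identity, $\bot$ constant $0$, $\top$ maps $p\neq0$ to $\omega$. Residuals $\backslash,/$ on $W$ satisfy $f\le h/g\iff fg\le h\iff g\le f\backslash h$; $f^{\ell}:=\mathrm{id}/f$, $f^{r}:=f\backslash\mathrm{id}$, $f^{o}:=\top\backslash f$; $\mathrm{last}(f):=\bigwedge\{p\in\overline\omega\mid f(p)=f(\omega)\}$. Basic terms: $t,u::=x\mid tu\mid t^{o}\mid t^{\ell}\mid t^{r}\mid\mathrm{id}\mid\bot$ ($x$ a term variable). A valuation $\theta$ maps term variables to $W$; $[\![x]\!]_\theta=\theta(x)$, $[\![tu]\!]_\theta=[\![t]\!]_\theta[\![u]\!]_\theta$, $[\![t^{\star}]\!]_\theta=([\![t]\!]_\theta)^{\star}$ for $\star\in\{o,\ell,r\}$, $[\![\mathrm{id}]\!]_\theta=\mathrm{id}$, $[\![\bot]\!]_\theta=\bot$. Samples: $\alpha::=\kappa\mid t[\alpha]\mid\mathsf{s}(\alpha)\mid\mathsf{p}(\alpha)\mid\mathsf{last}(t)$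 ($\kappa$ a time variable, $t$ a basic term). Relation $\leadsto$: $t[\alpha]\leadsto\alpha$; $\mathsf{s}(\alpha)\leadsto\alpha$; $\mathsf{p}(\alpha)\leadsto\alpha$; $(tu)[\alpha]\leadsto t[u[\alpha]]$; $t^{o}[\alpha]\leadsto t[\alpha]$; $t^{r}[\alpha]\leadsto t[t^{r}[\alpha]], t[\mathsf{s}(t^{r}[\alpha])]$; $t^{\ell}[\alpha]\leadsto t[t^{\ell}[\alpha]], t[\mathsf{p}(t^{\ell}[\alpha])]$; $t[\alpha]\leadsto t[\mathsf{last}(t)]$. A sample set is saturated if closed under $\leadsto$. For $p\in\overline\omega$: $p\ominus1=p-1$ if $p\in\omega\setminus\{0\}$, else $p$; $p\oplus1=p+1$ if $p\in\omega$, else $p$. For a saturated sample set $\Delta$, a $\Delta$-diagram is a map $\delta\colon\Delta\to\overline\omega$ such that (all samples mentioned belonging to $\Delta$): (S1) $\delta(\alpha)\le\delta(\beta)\Rightarrow\delta(t[\alpha])\le\delta(t[\beta])$; (S2) $\delta(\alpha)=0\Rightarrow\delta(t[\alpha])=0$; (S3) $\delta(\mathsf{p}(\alpha))=\delta(\alpha)\ominus1$; (S4) $\delta(\mathsf{s}(\alpha))=\delta(\alpha)\oplus1$; (S5) for $t[\alpha]\in\Delta$: $\delta(\mathsf{last}(t))\le\delta(\alpha)\iff\delta(t[\alpha])=\delta(t[\mathsf{last}(t)])$; (S6) $\delta(\mathsf{last}(t))=\omega\Rightarrow\delta(t[\mathsf{last}(t)])=\omega$; (L1) $\delta(\mathrm{id}[\alpha])=\delta(\alpha)$;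 (L2) if $\bot[\alpha]\in\Delta$ then $\delta(\mathsf{last}(\bot))=0$; (L3) $\delta((tu)[\alpha])=\delta(t[u[\alpha]])$; (L4) if $(tu)[\mathsf{last}(tu)]\in\Delta$ and $\delta(\mathsf{last}(tu))=\omega$ then $\delta(\mathsf{last}(t))=\delta(\mathsf{last}(u))=\omega$; (O1) $\delta(t^{o}[\alpha])\in\{0,\omega\}$; (O2) $\delta(\alpha)<\omega\Rightarrow(\delta(t^{o}[\alpha])=\omega\iff\delta(t[\alpha])=\omega)$; (O3) $\delta(\mathsf{last}(t^{o}))<\omega$; (O4) for $t[\alpha],t^{o}[\mathsf{last}(t^{o})]\in\Delta$: if $\delta(t^{o}[\mathsf{last}(t^{o})])<\omega$ and $\delta(\alpha)<\omega$ then $\delta(t[\alpha])<\omega$; (R1) $\delta(t[t^{r}[\alpha]])\le\delta(\alpha)$; (R2) for $t^{r}[\alpha]\in\Delta$: if $0<\delta(\alpha)<\omega$ and $\delta(t^{r}[\alpha])<\omega$ then $\delta(\alpha)<\delta(t[\mathsf{s}(t^{r}[\alpha])])$; (R3) for $t^{r}[\mathsf{last}(t^{r})]\in\Delta$: $\delta(\mathsf{last}(t^{r}))=\omega\Rightarrow\delta(\mathsf{last}(t))=\omega$; (R4) for $t^{r}[\mathsf{last}(t^{r})]\in\Delta$: $\delta(t^{r}[\mathsf{last}(t^{r})])<\omega\Rightarrow\delta(t[\mathsf{s}(t^{r}[\mathsf{last}(t^{r})])])=\omega$; (Λ1) for $t[t^{\ell}[\alpha]]\in\Delta$: $\delta(t^{\ell}[\alpha])<\omega\Rightarrow\delta(\alpha)\le\delta(t[t^{\ell}[\alpha]])$;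 (Λ2) for $t^{\ell}[\alpha]\in\Delta$: if $0<\delta(\alpha)<\omega$ and $\delta(t^{\ell}[\alpha])<\omega$ then $\delta(t[\mathsf{p}(t^{\ell}[\alpha])])<\delta(\alpha)$; (Λ3) for $t[t^{\ell}[\alpha]]\in\Delta$: if $\delta(\alpha)<\omega$ and $\delta(t^{\ell}[\alpha])=\omega$ then $\delta(t[t^{\ell}[\alpha]])<\delta(\alpha)$; (Λ4) for $t^{\ell}[\mathsf{last}(t^{\ell})]\in\Delta$: $\delta(\mathsf{last}(t^{\ell}))=\omega\Rightarrow\delta(\mathsf{last}(t))=\omega$; (Λ5) for $t^{\ell}[\mathsf{last}(t^{\ell})]\in\Delta$: $\delta(t^{\ell}[\mathsf{last}(t^{\ell})])<\omega\Rightarrow\delta(t[t^{\ell}[\mathsf{last}(t^{\ell})]])=\omega$. For a $\Delta$-diagram $\delta$ and basic term $t$, let $\delta_t:=\{(\delta(\alpha),\delta(t[\alpha]))\mid t[\alpha]\in\Delta\}$. A time warp $f$ extends $\delta_t$ if $f(i)=j$ for all $(i,j)\in\delta_t$, and strongly extends $\delta_t$ if moreover either $\delta_t=\emptyset$, or ($\delta_t\ne\emptyset$ and $\delta(\mathsf{last}(t))=\omega$ implies $\mathrm{last}(f)=\omega$). *)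

theory Defs
  imports "HOL-Library.Extended_Nat"
begin

section \<open>Time warps on \<open>\<omega>\<close>-bar (rendered as enat, with \<infinity> for \<omega>)\<close>

definition time_warp :: "(enat \<Rightarrow> enat) \<Rightarrow> bool" where
  "time_warp f \<longleftrightarrow> mono f \<and> f 0 = 0 \<and> f \<infinity> = (SUP n. f (enat n))"

definition W :: "(enat \<Rightarrow> enat) set" where
  "W = {f. time_warp f}"

definition top_w :: "enat \<Rightarrow> enat" where
  "top_w p = (if p = 0 then 0 else \<infinity>)"

definition bot_w :: "enat \<Rightarrow> enat" where
  "bot_w p = 0"

text \<open>Residuals in W (pointwise order, composition as multiplication):
  h / g is the greatest f in W with f \<circ> g \<le> h; f \ h is the greatest g in W with f \<circ> g \<le> h.
  They are given by pointwise suprema, W being closed under pointwise suprema.\<close>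

definition rres :: "(enat \<Rightarrow> enat) \<Rightarrow> (enat \<Rightarrow> enat) \<Rightarrow> (enat \<Rightarrow> enat)" where
  "rres h g = (\<lambda>p. SUP f \<in> {f \<in> W. f \<circ> g \<le> h}. f p)"

definition lres :: "(enat \<Rightarrow> enat) \<Rightarrow> (enat \<Rightarrow> enat) \<Rightarrow> (enat \<Rightarrow> enat)" where
  "lres f h = (\<lambda>p. SUP g \<in> {g \<in> W. f \<circ> g \<le> h}. g p)"

definition ladj :: "(enat \<Rightarrow> enat) \<Rightarrow> (enat \<Rightarrow> enat)" where
  "ladj f = rres id f"

definition radj :: "(enat \<Rightarrow> enat) \<Rightarrow> (enat \<Rightarrow> enat)" where
  "radj f = lres f id"

definition ores :: "(enat \<Rightarrow> enat) \<Rightarrow> (enat \<Rightarrow> enat)" where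
  "ores f = lres top_w f"

definition lastw :: "(enat \<Rightarrow> enat) \<Rightarrow> enat" where
  "lastw f = Inf {p. f p = f \<infinity>}"

datatype 'v bterm =
    BVar 'v
  | BComp "'v bterm" "'v bterm"
  | BO "'v bterm"
  | BL "'v bterm"
  | BR "'v bterm"
  | BId
  | BBot

primrec eval :: "('v \<Rightarrow> (enat \<Rightarrow> enat)) \<Rightarrow> 'v bterm \<Rightarrow> (enat \<Rightarrow> enat)" where
  "eval \<theta> (BVar x) = \<theta> x"
| "eval \<theta> (BComp t u) = eval \<theta> t \<circ> eval \<theta> u"
| "eval \<theta> (BO t) = ores (eval \<theta> t)"
| "eval \<theta> (BL t) = ladj (eval \<theta> t)"
| "eval \<theta> (BR t) = radj (eval \<theta> t)"
| "eval \<theta> BId = id"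
| "eval \<theta> BBot = bot_w"

datatype ('k, 'v) sample =
    SVar 'k
  | SApp "'v bterm" "('k, 'v) sample"
  | SS "('k, 'v) sample"
  | SP "('k, 'v) sample"
  | SLast "'v bterm"

inductive leadsto :: "('k, 'v) sample \<Rightarrow> ('k, 'v) sample \<Rightarrow> bool" where
  "leadsto (SApp t a) a"
| "leadsto (SS a) a"
| "leadsto (SP a) a"
| "leadsto (SApp (BComp t u) a) (SApp t (SApp u a))"
| "leadsto (SApp (BO t) a) (SApp t a)"
| "leadsto (SApp (BR t) a) (SApp t (SApp (BR t) a))"
| "leadsto (SApp (BR t) a) (SApp t (SS (SApp (BR t) a)))"
| "leadsto (SApp (BL t) a) (SApp t (SApp (BL t) a))"
| "leadsto (SApp (BL t) a) (SApp t (SP (SApp (BL t) a)))"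
| "leadsto (SApp t a) (SApp t (SLast t))"

definition saturated :: "('k, 'v) sample set \<Rightarrow> bool" where
  "saturated D \<longleftrightarrow> (\<forall>a b. a \<in> D \<longrightarrow> leadsto a b \<longrightarrow> b \<in> D)"

definition ominus1 :: "enat \<Rightarrow> enat" where
  "ominus1 p = (if p \<noteq> 0 \<and> p \<noteq> \<infinity> then p - 1 else p)"

definition oplus1 :: "enat \<Rightarrow> enat" where
  "oplus1 p = (if p \<noteq> \<infinity> then p + 1 else p)"

text \<open>A D-diagram: a map from samples to enat (only its values on D matter), subject to the
  conditions (S1)-(S6), (L1)-(L4), (O1)-(O4), (R1)-(R4), (\<Lambda>1)-(\<Lambda>5), where every sample
  mentioned in a condition is required to belong to D.\<close>

definition diagram :: "('k, 'v) sample set \<Rightarrow> (('k, 'v) sample \<Rightarrow> enat) \<Rightarrow> bool" where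
  "diagram D \<delta> \<longleftrightarrow>
    \<comment> \<open>S1\<close>
    (\<forall>t a b. a \<in> D \<and> b \<in> D \<and> SApp t a \<in> D \<and> SApp t b \<in> D \<and> \<delta> a \<le> \<delta> b
        \<longrightarrow> \<delta> (SApp t a) \<le> \<delta> (SApp t b)) \<and>
    \<comment> \<open>S2\<close>
    (\<forall>t a. a \<in> D \<and> SApp t a \<in> D \<and> \<delta> a = 0 \<longrightarrow> \<delta> (SApp t a) = 0) \<and>
    \<comment> \<open>S3\<close>
    (\<forall>a. a \<in> D \<and> SP a \<in> D \<longrightarrow> \<delta> (SP a) = ominus1 (\<delta> a)) \<and>
    \<comment> \<open>S4\<close>
    (\<forall>a. a \<in> D \<and> SS a \<in> D \<longrightarrow> \<delta> (SS a) = oplus1 (\<delta> a)) \<and>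
    \<comment> \<open>S5\<close>
    (\<forall>t a. a \<in> D \<and> SApp t a \<in> D \<and> SLast t \<in> D \<and> SApp t (SLast t) \<in> D \<longrightarrow>
        (\<delta> (SLast t) \<le> \<delta> a \<longleftrightarrow> \<delta> (SApp t a) = \<delta> (SApp t (SLast t)))) \<and>
    \<comment> \<open>S6\<close>
    (\<forall>t. SLast t \<in> D \<and> SApp t (SLast t) \<in> D \<and> \<delta> (SLast t) = \<infinity> \<longrightarrow>
        \<delta> (SApp t (SLast t)) = \<infinity>) \<and>
    \<comment> \<open>L1\<close>
    (\<forall>a. a \<in> D \<and> SApp BId a \<in> D \<longrightarrow> \<delta> (SApp BId a) = \<delta> a) \<and>
    \<comment> \<open>L2\<close>
    (\<forall>a. SApp BBot a \<in> D \<and> SLast BBot \<in> D \<longrightarrow> \<delta> (SLast BBot) = 0) \<and>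
    \<comment> \<open>L3\<close>
    (\<forall>t u a. SApp (BComp t u) a \<in> D \<and> SApp t (SApp u a) \<in> D \<longrightarrow>
        \<delta> (SApp (BComp t u) a) = \<delta> (SApp t (SApp u a))) \<and>
    \<comment> \<open>L4\<close>
    (\<forall>t u. SApp (BComp t u) (SLast (BComp t u)) \<in> D \<and> SLast (BComp t u) \<in> D \<and>
        SLast t \<in> D \<and> SLast u \<in> D \<and> \<delta> (SLast (BComp t u)) = \<infinity> \<longrightarrow>
        \<delta> (SLast t) = \<infinity> \<and> \<delta> (SLast u) = \<infinity>) \<and>
    \<comment> \<open>O1\<close>
    (\<forall>t a. SApp (BO t) a \<in> D \<longrightarrow> \<delta> (SApp (BO t) a) \<in> {0, \<infinity>}) \<and>
    \<comment> \<open>O2\<close>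
    (\<forall>t a. a \<in> D \<and> SApp (BO t) a \<in> D \<and> SApp t a \<in> D \<and> \<delta> a < \<infinity> \<longrightarrow>
        (\<delta> (SApp (BO t) a) = \<infinity> \<longleftrightarrow> \<delta> (SApp t a) = \<infinity>)) \<and>
    \<comment> \<open>O3\<close>
    (\<forall>t. SLast (BO t) \<in> D \<longrightarrow> \<delta> (SLast (BO t)) < \<infinity>) \<and>
    \<comment> \<open>O4\<close>
    (\<forall>t a. a \<in> D \<and> SApp t a \<in> D \<and> SApp (BO t) (SLast (BO t)) \<in> D \<and>
        \<delta> (SApp (BO t) (SLast (BO t))) < \<infinity> \<and> \<delta> a < \<infinity> \<longrightarrow> \<delta> (SApp t a) < \<infinity>) \<and>
    \<comment> \<open>R1\<close>
    (\<forall>t a. a \<in> D \<and> SApp t (SApp (BR t) a) \<in> D \<longrightarrow>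
        \<delta> (SApp t (SApp (BR t) a)) \<le> \<delta> a) \<and>
    \<comment> \<open>R2\<close>
    (\<forall>t a. a \<in> D \<and> SApp (BR t) a \<in> D \<and> SApp t (SS (SApp (BR t) a)) \<in> D \<and>
        0 < \<delta> a \<and> \<delta> a < \<infinity> \<and> \<delta> (SApp (BR t) a) < \<infinity> \<longrightarrow>
        \<delta> a < \<delta> (SApp t (SS (SApp (BR t) a)))) \<and>
    \<comment> \<open>R3\<close>
    (\<forall>t. SApp (BR t) (SLast (BR t)) \<in> D \<and> SLast (BR t) \<in> D \<and> SLast t \<in> D \<and>
        \<delta> (SLast (BR t)) = \<infinity> \<longrightarrow> \<delta> (SLast t) = \<infinity>) \<and>
    \<comment> \<open>R4\<close>
    (\<forall>t. SApp (BR t) (SLast (BR t)) \<in> D \<and>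
        SApp t (SS (SApp (BR t) (SLast (BR t)))) \<in> D \<and>
        \<delta> (SApp (BR t) (SLast (BR t))) < \<infinity> \<longrightarrow>
        \<delta> (SApp t (SS (SApp (BR t) (SLast (BR t))))) = \<infinity>) \<and>
    \<comment> \<open>\<Lambda>1\<close>
    (\<forall>t a. a \<in> D \<and> SApp (BL t) a \<in> D \<and> SApp t (SApp (BL t) a) \<in> D \<and>
        \<delta> (SApp (BL t) a) < \<infinity> \<longrightarrow> \<delta> a \<le> \<delta> (SApp t (SApp (BL t) a))) \<and>
    \<comment> \<open>\<Lambda>2\<close>
    (\<forall>t a. a \<in> D \<and> SApp (BL t) a \<in> D \<and> SApp t (SP (SApp (BL t) a)) \<in> D \<and>
        0 < \<delta> a \<and> \<delta> a < \<infinity> \<and> \<delta> (SApp (BL t) a) < \<infinity> \<longrightarrow>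
        \<delta> (SApp t (SP (SApp (BL t) a))) < \<delta> a) \<and>
    \<comment> \<open>\<Lambda>3\<close>
    (\<forall>t a. a \<in> D \<and> SApp (BL t) a \<in> D \<and> SApp t (SApp (BL t) a) \<in> D \<and>
        \<delta> a < \<infinity> \<and> \<delta> (SApp (BL t) a) = \<infinity> \<longrightarrow> \<delta> (SApp t (SApp (BL t) a)) < \<delta> a) \<and>
    \<comment> \<open>\<Lambda>4\<close>
    (\<forall>t. SApp (BL t) (SLast (BL t)) \<in> D \<and> SLast (BL t) \<in> D \<and> SLast t \<in> D \<and>
        \<delta> (SLast (BL t)) = \<infinity> \<longrightarrow> \<delta> (SLast t) = \<infinity>) \<and>
    \<comment> \<open>\<Lambda>5\<close>
    (\<forall>t. SApp (BL t) (SLast (BL t)) \<in> D \<and> SApp t (SApp (BL t) (SLast (BL t))) \<in> D \<and>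
        \<delta> (SApp (BL t) (SLast (BL t))) < \<infinity> \<longrightarrow>
        \<delta> (SApp t (SApp (BL t) (SLast (BL t)))) = \<infinity>)"

definition delta_t :: "('k, 'v) sample set \<Rightarrow> (('k, 'v) sample \<Rightarrow> enat) \<Rightarrow> 'v bterm \<Rightarrow> (enat \<times> enat) set" where
  "delta_t D \<delta> t = {(\<delta> a, \<delta> (SApp t a)) | a. SApp t a \<in> D}"

definition extends :: "(enat \<Rightarrow> enat) \<Rightarrow> (enat \<times> enat) set \<Rightarrow> bool" where
  "extends f R \<longleftrightarrow> (\<forall>(i, j) \<in> R. f i = j)"

definition strongly_extends ::
  "(enat \<Rightarrow> enat) \<Rightarrow> ('k, 'v) sample set \<Rightarrow> (('k, 'v) sample \<Rightarrow> enat) \<Rightarrow> 'v bterm \<Rightarrow> bool" where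
  "strongly_extends f D \<delta> t \<longleftrightarrow> time_warp f \<and> extends f (delta_t D \<delta> t) \<and>
     (delta_t D \<delta> t = {} \<or> (delta_t D \<delta> t \<noteq> {} \<and> (\<delta> (SLast t) = \<infinity> \<longrightarrow> lastw f = \<infinity>)))"

end

theory Submission
  imports Defs
begin

text \<open>At a finite nonzero argument \<open>p = \<delta>(\<alpha>)\<close> the value of a
  residual is characterised by its Galois property, which can be tested against two-valued step
  warps; conditions (R1)-(R2), (\<Lambda>1)-(\<Lambda>3) and (O1)-(O2) say precisely that
  \<open>\<delta>(t\<^sup>r[\<alpha>])\<close>, \<open>\<delta>(t\<^sup>\<ell>[\<alpha>])\<close> and \<open>\<delta>(t\<^sup>o[\<alpha>])\<close> are these values. At the
  argument \<open>\<omega>\<close>, (S5) moves everything to the sample \<open>last(\<cdot>)\<close>, and the value of the residual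
  at \<open>\<omega>\<close> is pinned down by (R3)-(R4), (\<Lambda>4)-(\<Lambda>5), (O3)-(O4) together with the strong
  extension hypothesis for \<open>t\<close>. Strong extension itself propagates because \<open>last(f) = \<omega>\<close>
  means that \<open>f\<close> is finite on \<open>\<omega>\<close> but unbounded, which is preserved by composition and by
  both adjoints.\<close>

section \<open>Time warps and their residuals\<close>

lemma enat_eq_infinityI: "(\<And>n. enat n \<le> x) \<Longrightarrow> x = \<infinity>"
  by (metis enat_ord_simps(2) lessI not_infinity_eq not_le)

lemma time_warp_mono: "time_warp f \<Longrightarrow> x \<le> y \<Longrightarrow> f x \<le> f y"
  unfolding time_warp_def by (auto dest: monoD)

lemma time_warp_zero: "time_warp f \<Longrightarrow> f 0 = 0"
  unfolding time_warp_def by auto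

lemma time_warp_infinity: "time_warp f \<Longrightarrow> f \<infinity> = (SUP n. f (enat n))"
  unfolding time_warp_def by auto

lemma time_warp_Sup:
  assumes tw: "time_warp f"
  shows "f (Sup A) = (SUP a\<in>A. f a)"
proof (cases "finite A")
  case True
  show ?thesis
  proof (cases "A = {}")
    case True
    then show ?thesis using time_warp_zero[OF tw] by (simp add: bot_enat_def)
  next
    case False
    then have "Sup A \<in> A" using \<open>finite A\<close> by (simp add: Sup_enat_def)
    then show ?thesis
      by (metis (no_types, lifting) SUP_least SUP_upper Sup_upper antisym tw time_warp_mono)
  qed
next
  case infinite: False
  have "f (enat n) \<le> (SUP a\<in>A. f a)" for n
  proof -
    obtain a where "a \<in> A" "enat n \<le> a"
      using infinite finite_enat_bounded[of A n] by (meson linear)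
    then show ?thesis by (meson SUP_upper2 tw time_warp_mono)
  qed
  then have "f \<infinity> \<le> (SUP a\<in>A. f a)" by (simp add: time_warp_infinity[OF tw] SUP_least)
  moreover have "(SUP a\<in>A. f a) \<le> f \<infinity>" by (simp add: SUP_least tw time_warp_mono)
  moreover have "Sup A = \<infinity>" using infinite by (auto simp: Sup_enat_def)
  ultimately show ?thesis by simp
qed

lemma time_warp_comp: "time_warp f \<Longrightarrow> time_warp g \<Longrightarrow> time_warp (f \<circ> g)"
  by (simp add: time_warp_def mono_def time_warp_Sup[unfolded time_warp_def] image_image)

lemma time_warp_id: "time_warp id"
proof -
  have "Sup (range enat) = \<infinity>" by (rule enat_eq_infinityI) (simp add: Sup_upper)
  then show ?thesis by (simp add: time_warp_def mono_def)
qed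

lemma time_warp_bot_w: "time_warp bot_w"
  by (simp add: time_warp_def mono_def bot_w_def)

lemma time_warp_top_w: "time_warp top_w"
  unfolding time_warp_def
proof (intro conjI)
  show "mono top_w" by (auto intro!: monoI simp: top_w_def le_zero_eq)
  show "top_w 0 = 0" by (simp add: top_w_def)
  have "top_w (enat 1) \<le> (SUP n. top_w (enat n))" by (rule SUP_upper) simp
  then show "top_w \<infinity> = (SUP n. top_w (enat n))" by (simp add: top_w_def zero_enat_def)
qed

lemma time_warp_SUP:
  assumes "\<And>g. g \<in> S \<Longrightarrow> time_warp g"
  shows "time_warp (\<lambda>p. SUP g\<in>S. g p)"
  unfolding time_warp_def
proof (intro conjI)
  show "mono (\<lambda>p. SUP g\<in>S. g p)"
    by (rule monoI, rule SUP_mono) (meson assms time_warp_mono order.refl)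
  have "(SUP g\<in>S. g 0) = (SUP g\<in>S. (0::enat))" by (rule SUP_cong) (auto simp: assms time_warp_zero)
  then show "(SUP g\<in>S. g 0) = 0" by (cases "S = {}") (simp_all add: bot_enat_def)
  have "(SUP g\<in>S. g \<infinity>) = (SUP g\<in>S. SUP n. g (enat n))"
    using assms time_warp_infinity by (metis (mono_tags, lifting) SUP_cong)
  also have "\<dots> = (SUP n. SUP g\<in>S. g (enat n))" by (rule SUP_commute)
  finally show "(SUP g\<in>S. g \<infinity>) = (SUP n. SUP g\<in>S. g (enat n))" .
qed

lemma time_warp_lres: "time_warp (lres f h)"
  unfolding lres_def by (rule time_warp_SUP) (simp add: W_def)

lemma time_warp_rres: "time_warp (rres h g)"
  unfolding rres_def by (rule time_warp_SUP) (simp add: W_def)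

lemma lres_upper: "time_warp g \<Longrightarrow> f \<circ> g \<le> h \<Longrightarrow> g p \<le> lres f h p"
  unfolding lres_def by (rule SUP_upper) (simp add: W_def)

lemma rres_upper: "time_warp f \<Longrightarrow> f \<circ> g \<le> h \<Longrightarrow> f p \<le> rres h g p"
  unfolding rres_def by (rule SUP_upper) (simp add: W_def)

lemma apply_lres_le:
  assumes "time_warp f" shows "f (lres f h p) \<le> h p"
proof -
  have "f (lres f h p) = (SUP g\<in>{g \<in> W. f \<circ> g \<le> h}. f (g p))"
    unfolding lres_def using time_warp_Sup[OF assms] by (simp add: image_image)
  also have "\<dots> \<le> h p" by (rule SUP_least) (auto simp: le_fun_def)
  finally show ?thesis .
qed

lemma rres_apply_le: "rres h g (g p) \<le> h p"
  unfolding rres_def by (rule SUP_least) (auto simp: le_fun_def)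

text \<open>The residuals are suprema over all of \<open>W\<close>; the two-valued warps \<open>step_warp p x\<close> are
  the test functions that pin down their values at a finite nonzero point \<open>p\<close>.\<close>

definition step_warp :: "enat \<Rightarrow> enat \<Rightarrow> enat \<Rightarrow> enat" where
  "step_warp p x = (\<lambda>r. if p \<le> r then x else 0)"

lemma time_warp_step_warp:
  assumes "0 < p" "p < \<infinity>" shows "time_warp (step_warp p x)"
proof -
  obtain k where k: "p = enat k" using assms by (cases p) auto
  have "(SUP n. step_warp p x (enat n)) = x"
  proof (rule antisym)
    show "(SUP n. step_warp p x (enat n)) \<le> x" by (rule SUP_least) (simp add: step_warp_def)
    show "x \<le> (SUP n. step_warp p x (enat n))" by (rule SUP_upper2[of k]) (auto simp: step_warp_def k)
  qed
  then show ?thesis using assms by (auto simp: time_warp_def step_warp_def mono_def k)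
qed

lemma time_warp_radj: "time_warp (radj f)"
  unfolding radj_def by (rule time_warp_lres)

lemma time_warp_ladj: "time_warp (ladj f)"
  unfolding ladj_def by (rule time_warp_rres)

lemma time_warp_ores: "time_warp (ores f)"
  unfolding ores_def by (rule time_warp_lres)

lemma apply_radj_le: "time_warp f \<Longrightarrow> f (radj f p) \<le> p"
  unfolding radj_def using apply_lres_le[of f id p] by simp

lemma le_radj:
  assumes tw: "time_warp f" and p: "0 < p" "p < \<infinity>" and q: "f q \<le> p"
  shows "q \<le> radj f p"
proof -
  have "f \<circ> step_warp p q \<le> id"
    using q time_warp_zero[OF tw] by (auto simp: le_fun_def step_warp_def intro: order.trans)
  from lres_upper[OF time_warp_step_warp[OF p] this, of p] show ?thesis
    by (simp add: radj_def step_warp_def)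
qed

lemma ladj_apply_le: "ladj f (f q) \<le> q"
  unfolding ladj_def using rres_apply_le[of id f q] by simp

lemma le_ladj:
  assumes p: "0 < p" "p < \<infinity>" and x: "\<And>s. p \<le> f s \<Longrightarrow> x \<le> s"
  shows "x \<le> ladj f p"
proof -
  have "step_warp p x \<circ> f \<le> id"
    using x by (auto simp: le_fun_def step_warp_def)
  from rres_upper[OF time_warp_step_warp[OF p] this, of p] show ?thesis
    by (simp add: ladj_def step_warp_def)
qed

lemma radj_eqI:
  assumes tw: "time_warp f" and p: "0 < p" "p < \<infinity>"
    and below: "f q \<le> p" and above: "\<And>s. q < s \<Longrightarrow> p < f s"
  shows "radj f p = q"
proof (rule antisym)
  show "radj f p \<le> q"
    using above[of "radj f p"] apply_radj_le[OF tw, of p] by (meson not_le)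
  show "q \<le> radj f p" using le_radj[OF tw p below] .
qed

lemma ladj_eqI:
  assumes tw: "time_warp f" and p: "0 < p" "p < \<infinity>"
    and below: "\<And>s. s < q \<Longrightarrow> f s < p" and above: "q < \<infinity> \<Longrightarrow> p \<le> f q"
  shows "ladj f p = q"
proof (rule antisym)
  show "ladj f p \<le> q"
  proof (cases "q = \<infinity>")
    case False
    then have "ladj f p \<le> ladj f (f q)" using above time_warp_mono[OF time_warp_ladj] by simp
    then show ?thesis using ladj_apply_le order.trans by blast
  qed simp
  show "q \<le> ladj f p" using le_ladj[OF p] below by (meson not_le)
qed

lemma ores_finite:
  assumes tw: "time_warp f" and p: "p < \<infinity>"
  shows "ores f p = (if f p = \<infinity> then \<infinity> else 0)"
proof (cases "f p = \<infinity>")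
  case True
  have "0 < p" using True time_warp_zero[OF tw] by (cases "p = 0") (auto simp: zero_less_iff_neq_zero)
  have "f r = \<infinity>" if "p \<le> r" for r
    using time_warp_mono[OF tw that] True by (simp add: top_enat_def[symmetric] top_unique)
  then have "top_w \<circ> step_warp p \<infinity> \<le> f"
    by (auto simp: le_fun_def step_warp_def top_w_def)
  from lres_upper[OF time_warp_step_warp[OF \<open>0 < p\<close> p] this, of p] show ?thesis
    using True by (simp add: ores_def step_warp_def)
next
  case False
  then show ?thesis
    using apply_lres_le[OF time_warp_top_w, of f p] by (auto simp: ores_def top_w_def split: if_splits)
qed

lemma lastw_eq_infinity_iff:
  assumes tw: "time_warp f"
  shows "lastw f = \<infinity> \<longleftrightarrow> f \<infinity> = \<infinity> \<and> (\<forall>n. f (enat n) < \<infinity>)"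
proof
  assume l: "lastw f = \<infinity>"
  have "f (enat m) \<noteq> f \<infinity>" for m
    using Inf_lower[of "enat m" "{p. f p = f \<infinity>}"] l by (auto simp: lastw_def)
  then have lt: "f (enat m) < f \<infinity>" for m
    using time_warp_mono[OF tw, of "enat m" \<infinity>] by (simp add: order_less_le)
  have "f \<infinity> = \<infinity>"
  proof (rule ccontr)
    assume "f \<infinity> \<noteq> \<infinity>"
    then obtain c where c: "f \<infinity> = enat c" by auto
    have "f (enat m) \<le> enat (c - 1)" for m
      using lt[of m] c by (cases "f (enat m)") auto
    then have "f \<infinity> \<le> enat (c - 1)" by (simp add: time_warp_infinity[OF tw] SUP_least)
    moreover have "0 < c" using lt[of 0] c time_warp_zero[OF tw] by (simp add: zero_enat_def)
    ultimately show False using c by simp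
  qed
  with lt show "f \<infinity> = \<infinity> \<and> (\<forall>n. f (enat n) < \<infinity>)" by simp
next
  assume "f \<infinity> = \<infinity> \<and> (\<forall>n. f (enat n) < \<infinity>)"
  then have "\<infinity> \<le> p" if "f p = f \<infinity>" for p
    using that by (cases p) (auto simp del: not_infinity_eq)
  then have "\<infinity> \<le> lastw f" unfolding lastw_def by (blast intro: Inf_greatest)
  then show "lastw f = \<infinity>" by (simp add: top_unique)
qed

lemma lastw_id: "lastw id = \<infinity>"
  using lastw_eq_infinity_iff[OF time_warp_id] by simp

lemma lastw_comp:
  assumes "time_warp f" "time_warp g" "lastw f = \<infinity>" "lastw g = \<infinity>"
  shows "lastw (f \<circ> g) = \<infinity>"
proof -
  have "(f \<circ> g) (enat n) < \<infinity>" for n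
    using assms lastw_eq_infinity_iff by (metis comp_apply less_infinityE)
  then show ?thesis using assms by (simp add: lastw_eq_infinity_iff time_warp_comp)
qed

lemma lastw_radj:
  assumes tw: "time_warp f" and "lastw f = \<infinity>"
  shows "lastw (radj f) = \<infinity>"
proof -
  have f: "f \<infinity> = \<infinity>" "f (enat n) < \<infinity>" for n
    using assms lastw_eq_infinity_iff by blast+
  have "radj f (enat n) < \<infinity>" for n
    using apply_radj_le[OF tw, of "enat n"] f(1) by (cases "radj f (enat n)") auto
  moreover have "radj f \<infinity> = \<infinity>"
  proof (rule enat_eq_infinityI)
    fix q
    obtain c where c: "f (enat q) = enat c" using f(2) by auto
    have "enat q \<le> radj f (enat (Suc c))"
      by (rule le_radj[OF tw]) (auto simp: c zero_enat_def)
    also have "\<dots> \<le> radj f \<infinity>" by (rule time_warp_mono[OF time_warp_radj]) simp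
    finally show "enat q \<le> radj f \<infinity>" .
  qed
  ultimately show ?thesis by (simp add: lastw_eq_infinity_iff[OF time_warp_radj])
qed

lemma lastw_ladj:
  assumes tw: "time_warp f" and "lastw f = \<infinity>"
  shows "lastw (ladj f) = \<infinity>"
proof -
  have f: "f \<infinity> = \<infinity>" "f (enat n) < \<infinity>" for n
    using assms lastw_eq_infinity_iff by blast+
  have "ladj f (enat n) < \<infinity>" for n
  proof -
    have "(SUP q. f (enat q)) = top" using f(1) time_warp_infinity[OF tw] by (simp add: top_enat_def)
    then obtain q where "enat n < f (enat q)" unfolding SUP_eq_top_iff by (auto simp: top_enat_def)
    then have "ladj f (enat n) \<le> ladj f (f (enat q))" by (intro time_warp_mono[OF time_warp_ladj]) simp
    also have "\<dots> \<le> enat q" by (rule ladj_apply_le)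
    finally show ?thesis using enat_ile by fastforce
  qed
  moreover have "ladj f \<infinity> = \<infinity>"
  proof (rule enat_eq_infinityI)
    fix q
    obtain c where c: "f (enat q) = enat c" using f(2) by auto
    have "f s < enat (Suc c)" if "s \<le> enat q" for s
      using time_warp_mono[OF tw that] c by (simp add: le_less_trans)
    then have "enat (Suc q) \<le> ladj f (enat (Suc c))"
      by (intro le_ladj) (auto simp: zero_enat_def, metis Suc_ile_eq not_le)
    also have "\<dots> \<le> ladj f \<infinity>" by (rule time_warp_mono[OF time_warp_ladj]) simp
    finally show "enat q \<le> ladj f \<infinity>" by (meson Suc_ile_eq order.strict_implies_order)
  qed
  ultimately show ?thesis by (simp add: lastw_eq_infinity_iff[OF time_warp_ladj])
qed

lemma radj_infinity_le:
  assumes tw: "time_warp f" and "f (enat (Suc k)) = \<infinity>"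
  shows "radj f \<infinity> \<le> enat k"
proof -
  have "radj f (enat n) \<le> enat k" for n
  proof (rule ccontr)
    assume "\<not> radj f (enat n) \<le> enat k"
    then have "enat (Suc k) \<le> radj f (enat n)" by (simp add: Suc_ile_eq)
    then have "f (enat (Suc k)) \<le> enat n"
      using time_warp_mono[OF tw] apply_radj_le[OF tw] order.trans by blast
    with assms(2) show False by simp
  qed
  then show ?thesis by (simp add: time_warp_infinity[OF time_warp_radj] SUP_least)
qed

lemma ores_infinity:
  assumes tw: "time_warp f" and "\<And>n. f (enat n) < \<infinity>"
  shows "ores f \<infinity> = 0"
proof -
  have "ores f (enat n) = 0" for n
    using assms by (simp add: ores_finite)
  then show ?thesis by (simp add: time_warp_infinity[OF time_warp_ores])
qed

lemma strongly_extends_iff: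
  "strongly_extends f D \<delta> t \<longleftrightarrow> time_warp f \<and>
     (\<forall>a. SApp t a \<in> D \<longrightarrow> f (\<delta> a) = \<delta> (SApp t a)) \<and>
     (\<forall>a. SApp t a \<in> D \<longrightarrow> \<delta> (SLast t) = \<infinity> \<longrightarrow> lastw f = \<infinity>)"
  unfolding strongly_extends_def extends_def delta_t_def by auto

lemma strongly_extendsI:
  assumes "time_warp f"
    and "\<And>a. SApp t a \<in> D \<Longrightarrow> f (\<delta> a) = \<delta> (SApp t a)"
    and "\<And>a. SApp t a \<in> D \<Longrightarrow> \<delta> (SLast t) = \<infinity> \<Longrightarrow> lastw f = \<infinity>"
  shows "strongly_extends f D \<delta> t"
  using assms by (simp add: strongly_extends_iff)

lemma strongly_extends_time_warp: "strongly_extends f D \<delta> t \<Longrightarrow> time_warp f"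
  by (simp add: strongly_extends_iff)

lemma strongly_extends_apply:
  "strongly_extends f D \<delta> t \<Longrightarrow> SApp t a \<in> D \<Longrightarrow> f (\<delta> a) = \<delta> (SApp t a)"
  by (simp add: strongly_extends_iff)

lemma strongly_extends_lastw:
  "strongly_extends f D \<delta> t \<Longrightarrow> SApp t a \<in> D \<Longrightarrow> \<delta> (SLast t) = \<infinity> \<Longrightarrow> lastw f = \<infinity>"
  by (auto simp add: strongly_extends_iff)

section \<open>Diagrams over a saturated sample set\<close>

lemma oplus1_enat [simp]: "oplus1 (enat k) = enat (Suc k)"
  by (simp add: oplus1_def eSuc_enat[symmetric] eSuc_plus_1)

lemma ominus1_enat_Suc [simp]: "ominus1 (enat (Suc k)) = enat k"
  by (simp add: ominus1_def one_enat_def zero_enat_def)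

locale saturated_diagram =
  fixes D :: "('k, 'v) sample set" and \<delta> :: "('k, 'v) sample \<Rightarrow> enat"
  assumes saturated: "saturated D" and diagram: "diagram D \<delta>"
begin

lemma closed: "a \<in> D \<Longrightarrow> leadsto a b \<Longrightarrow> b \<in> D"
  using saturated unfolding saturated_def by blast

lemma closed_arg: "SApp t a \<in> D \<Longrightarrow> a \<in> D"
  by (erule closed) (rule leadsto.intros)

lemma closed_BComp: "SApp (BComp t u) a \<in> D \<Longrightarrow> SApp t (SApp u a) \<in> D"
  by (erule closed) (rule leadsto.intros)

lemma closed_BO: "SApp (BO t) a \<in> D \<Longrightarrow> SApp t a \<in> D"
  by (erule closed) (rule leadsto.intros)

lemma closed_BR: "SApp (BR t) a \<in> D \<Longrightarrow> SApp t (SApp (BR t) a) \<in> D"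
  by (erule closed) (rule leadsto.intros)

lemma closed_BR_SS: "SApp (BR t) a \<in> D \<Longrightarrow> SApp t (SS (SApp (BR t) a)) \<in> D"
  by (erule closed) (rule leadsto.intros)

lemma closed_BL: "SApp (BL t) a \<in> D \<Longrightarrow> SApp t (SApp (BL t) a) \<in> D"
  by (erule closed) (rule leadsto.intros)

lemma closed_BL_SP: "SApp (BL t) a \<in> D \<Longrightarrow> SApp t (SP (SApp (BL t) a)) \<in> D"
  by (erule closed) (rule leadsto.intros)

lemma closed_SLast_app: "SApp t a \<in> D \<Longrightarrow> SApp t (SLast t) \<in> D"
  by (erule closed) (rule leadsto.intros)

lemma closed_SLast: "SApp t a \<in> D \<Longrightarrow> SLast t \<in> D"
  using closed_SLast_app closed_arg by blast

text \<open>Conditions (S2)-(\<Lambda>5) of a diagram, with the membership side conditions implied by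
  saturation dropped.\<close>

lemma S2: assumes "SApp t a \<in> D" "\<delta> a = 0" shows "\<delta> (SApp t a) = 0"
  using diagram assms closed_arg[OF assms(1)] unfolding diagram_def by metis

lemma S3: assumes "SP a \<in> D" "a \<in> D" shows "\<delta> (SP a) = ominus1 (\<delta> a)"
  using diagram assms unfolding diagram_def by metis

lemma S4: assumes "SS a \<in> D" "a \<in> D" shows "\<delta> (SS a) = oplus1 (\<delta> a)"
  using diagram assms unfolding diagram_def by metis

lemma S5:
  assumes "SApp t a \<in> D"
  shows "\<delta> (SLast t) \<le> \<delta> a \<longleftrightarrow> \<delta> (SApp t a) = \<delta> (SApp t (SLast t))"
  using diagram assms closed_arg[OF assms] closed_SLast[OF assms] closed_SLast_app[OF assms]
  unfolding diagram_def by metis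

lemma L1: assumes "SApp BId a \<in> D" shows "\<delta> (SApp BId a) = \<delta> a"
  using diagram assms closed_arg[OF assms] unfolding diagram_def by metis

lemma L2: assumes "SApp BBot a \<in> D" shows "\<delta> (SLast BBot) = 0"
  using diagram assms closed_SLast[OF assms] unfolding diagram_def by metis

lemma L3: assumes "SApp (BComp t u) a \<in> D" shows "\<delta> (SApp (BComp t u) a) = \<delta> (SApp t (SApp u a))"
  using diagram assms closed_BComp[OF assms] unfolding diagram_def by metis

lemma L4:
  assumes "SApp (BComp t u) a \<in> D" "\<delta> (SLast (BComp t u)) = \<infinity>"
  shows "\<delta> (SLast t) = \<infinity>" "\<delta> (SLast u) = \<infinity>"
proof -
  have "SApp t (SApp u a) \<in> D" using closed_BComp[OF assms(1)] .
  then show "\<delta> (SLast t) = \<infinity>" "\<delta> (SLast u) = \<infinity>"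
    using diagram assms closed_SLast_app[OF assms(1)] closed_SLast[OF assms(1)]
      closed_SLast closed_arg
    unfolding diagram_def by metis+
qed

lemma O1: assumes "SApp (BO t) a \<in> D" shows "\<delta> (SApp (BO t) a) \<in> {0, \<infinity>}"
  using diagram assms unfolding diagram_def by metis

lemma O2:
  assumes "SApp (BO t) a \<in> D" "\<delta> a < \<infinity>"
  shows "\<delta> (SApp (BO t) a) = \<infinity> \<longleftrightarrow> \<delta> (SApp t a) = \<infinity>"
  using diagram assms closed_arg[OF assms(1)] closed_BO[OF assms(1)] unfolding diagram_def by metis

lemma O3: assumes "SApp (BO t) a \<in> D" shows "\<delta> (SLast (BO t)) < \<infinity>"
  using diagram assms closed_SLast[OF assms] unfolding diagram_def by metis

lemma O4:
  assumes "SApp t a \<in> D" "SApp (BO t) b \<in> D"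
    and "\<delta> (SApp (BO t) (SLast (BO t))) < \<infinity>" "\<delta> a < \<infinity>"
  shows "\<delta> (SApp t a) < \<infinity>"
  using diagram assms closed_arg[OF assms(1)] closed_SLast_app[OF assms(2)]
  unfolding diagram_def by metis

lemma R1: assumes "SApp (BR t) a \<in> D" shows "\<delta> (SApp t (SApp (BR t) a)) \<le> \<delta> a"
  using diagram assms closed_arg[OF assms] closed_BR[OF assms] unfolding diagram_def by metis

lemma R2:
  assumes "SApp (BR t) a \<in> D" "0 < \<delta> a" "\<delta> a < \<infinity>" "\<delta> (SApp (BR t) a) < \<infinity>"
  shows "\<delta> a < \<delta> (SApp t (SS (SApp (BR t) a)))"
  using diagram assms closed_arg[OF assms(1)] closed_BR_SS[OF assms(1)]
  unfolding diagram_def by metis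

lemma R3:
  assumes "SApp (BR t) a \<in> D" "\<delta> (SLast (BR t)) = \<infinity>"
  shows "\<delta> (SLast t) = \<infinity>"
  using diagram assms closed_SLast_app[OF assms(1)] closed_SLast[OF assms(1)]
    closed_SLast[OF closed_BR[OF assms(1)]]
  unfolding diagram_def by metis

lemma R4:
  assumes "SApp (BR t) a \<in> D" "\<delta> (SApp (BR t) (SLast (BR t))) < \<infinity>"
  shows "\<delta> (SApp t (SS (SApp (BR t) (SLast (BR t))))) = \<infinity>"
  using diagram assms closed_SLast_app[OF assms(1)] closed_BR_SS[OF closed_SLast_app[OF assms(1)]]
  unfolding diagram_def by metis

lemma \<Lambda>1:
  assumes "SApp (BL t) a \<in> D" "\<delta> (SApp (BL t) a) < \<infinity>"
  shows "\<delta> a \<le> \<delta> (SApp t (SApp (BL t) a))"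
  using diagram assms closed_arg[OF assms(1)] closed_BL[OF assms(1)] unfolding diagram_def by metis

lemma \<Lambda>2:
  assumes "SApp (BL t) a \<in> D" "0 < \<delta> a" "\<delta> a < \<infinity>" "\<delta> (SApp (BL t) a) < \<infinity>"
  shows "\<delta> (SApp t (SP (SApp (BL t) a))) < \<delta> a"
  using diagram assms closed_arg[OF assms(1)] closed_BL_SP[OF assms(1)]
  unfolding diagram_def by metis

lemma \<Lambda>3:
  assumes "SApp (BL t) a \<in> D" "\<delta> a < \<infinity>" "\<delta> (SApp (BL t) a) = \<infinity>"
  shows "\<delta> (SApp t (SApp (BL t) a)) < \<delta> a"
  using diagram assms closed_arg[OF assms(1)] closed_BL[OF assms(1)] unfolding diagram_def by metis

lemma \<Lambda>4:
  assumes "SApp (BL t) a \<in> D" "\<delta> (SLast (BL t)) = \<infinity>"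
  shows "\<delta> (SLast t) = \<infinity>"
  using diagram assms closed_SLast_app[OF assms(1)] closed_SLast[OF assms(1)]
    closed_SLast[OF closed_BL[OF assms(1)]]
  unfolding diagram_def by metis

lemma \<Lambda>5:
  assumes "SApp (BL t) a \<in> D" "\<delta> (SApp (BL t) (SLast (BL t))) < \<infinity>"
  shows "\<delta> (SApp t (SApp (BL t) (SLast (BL t)))) = \<infinity>"
  using diagram assms closed_SLast_app[OF assms(1)] closed_BL[OF closed_SLast_app[OF assms(1)]]
  unfolding diagram_def by metis

lemma value_at_infinity:
  assumes "SApp t a \<in> D" "\<delta> a = \<infinity>"
  shows "\<delta> (SApp t a) = \<delta> (SApp t (SLast t))"
  using S5[OF assms(1)] assms(2) by simp

section \<open>Strong extension through the term constructors\<close>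

lemma strongly_extends_BComp:
  assumes f: "strongly_extends f D \<delta> t" and g: "strongly_extends g D \<delta> u"
  shows "strongly_extends (f \<circ> g) D \<delta> (BComp t u)"
proof (rule strongly_extendsI)
  show "time_warp (f \<circ> g)"
    using f g by (simp add: strongly_extends_time_warp time_warp_comp)
next
  fix a assume aD: "SApp (BComp t u) a \<in> D"
  have "SApp t (SApp u a) \<in> D" "SApp u a \<in> D" using closed_BComp[OF aD] closed_arg by blast+
  then show "(f \<circ> g) (\<delta> a) = \<delta> (SApp (BComp t u) a)"
    using L3[OF aD] strongly_extends_apply[OF f] strongly_extends_apply[OF g] by simp
next
  fix a assume aD: "SApp (BComp t u) a \<in> D" and "\<delta> (SLast (BComp t u)) = \<infinity>"
  then have "\<delta> (SLast t) = \<infinity>" "\<delta> (SLast u) = \<infinity>" by (rule L4)+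
  moreover have "SApp t (SApp u a) \<in> D" "SApp u a \<in> D" using closed_BComp[OF aD] closed_arg by blast+
  ultimately show "lastw (f \<circ> g) = \<infinity>"
    using f g by (meson lastw_comp strongly_extends_lastw strongly_extends_time_warp)
qed

lemma strongly_extends_BId: "strongly_extends id D \<delta> BId"
  by (rule strongly_extendsI) (simp_all add: time_warp_id L1 lastw_id)

lemma strongly_extends_BBot: "strongly_extends bot_w D \<delta> BBot"
proof (rule strongly_extendsI)
  fix a assume aD: "SApp BBot a \<in> D"
  have "\<delta> (SApp BBot a) = \<delta> (SApp BBot (SLast BBot))" using S5[OF aD] L2[OF aD] by simp
  also have "\<dots> = 0" using S2[OF closed_SLast_app[OF aD] L2[OF aD]] .
  finally show "bot_w (\<delta> a) = \<delta> (SApp BBot a)" by (simp add: bot_w_def)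
  show "\<delta> (SLast BBot) = \<infinity> \<Longrightarrow> lastw bot_w = \<infinity>" using L2[OF aD] by simp
qed (rule time_warp_bot_w)

lemma ores_extends_finite:
  assumes f: "strongly_extends f D \<delta> t" and aD: "SApp (BO t) a \<in> D" and fin: "\<delta> a < \<infinity>"
  shows "ores f (\<delta> a) = \<delta> (SApp (BO t) a)"
proof -
  have "f (\<delta> a) = \<delta> (SApp t a)" using strongly_extends_apply[OF f closed_BO[OF aD]] .
  then show ?thesis
    using O1[OF aD] O2[OF aD fin] ores_finite[OF strongly_extends_time_warp[OF f] fin] by auto
qed

lemma ores_extends_infinity:
  assumes f: "strongly_extends f D \<delta> t" and aD: "SApp (BO t) a \<in> D" and inf: "\<delta> a = \<infinity>"
  shows "ores f (\<delta> a) = \<delta> (SApp (BO t) a)"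
proof -
  let ?l = "SLast (BO t)" and ?v = "\<delta> (SApp (BO t) (SLast (BO t)))"
  have tw: "time_warp f" using strongly_extends_time_warp[OF f] .
  have v: "ores f (\<delta> ?l) = ?v"
    using ores_extends_finite[OF f closed_SLast_app[OF aD] O3[OF aD]] .
  consider "?v = \<infinity>" | "?v = 0" using O1[OF closed_SLast_app[OF aD]] by auto
  then have "ores f \<infinity> = ?v"
  proof cases
    case 1
    then show ?thesis using v time_warp_mono[OF time_warp_ores, of "\<delta> ?l" \<infinity> f] by (simp add: top_unique)
  next
    case 2
    have tD: "SApp t a \<in> D" using closed_BO[OF aD] .
    have "f (enat n) < \<infinity>" for n
    proof (cases "\<delta> (SLast t) = \<infinity>")
      case True
      then show ?thesis using strongly_extends_lastw[OF f tD] lastw_eq_infinity_iff[OF tw] by blast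
    next
      case False
      have "f \<infinity> = \<delta> (SApp t (SLast t))"
        using strongly_extends_apply[OF f tD] value_at_infinity[OF tD inf] inf by simp
      also have "\<dots> < \<infinity>"
        using O4[OF closed_SLast_app[OF tD] aD] 2 False by simp
      finally have "f \<infinity> < \<infinity>" .
      moreover have "f (enat n) \<le> f \<infinity>" by (rule time_warp_mono[OF tw]) simp
      ultimately show ?thesis by (rule le_less_trans[rotated])
    qed
    then show ?thesis using ores_infinity[OF tw] 2 by simp
  qed
  then show ?thesis using value_at_infinity[OF aD inf] inf by simp
qed

lemma strongly_extends_BO:
  assumes f: "strongly_extends f D \<delta> t"
  shows "strongly_extends (ores f) D \<delta> (BO t)"
proof (rule strongly_extendsI)
  fix a assume aD: "SApp (BO t) a \<in> D"
  show "ores f (\<delta> a) = \<delta> (SApp (BO t) a)"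
    using ores_extends_finite[OF f aD] ores_extends_infinity[OF f aD] by (cases "\<delta> a < \<infinity>") auto
  show "\<delta> (SLast (BO t)) = \<infinity> \<Longrightarrow> lastw (ores f) = \<infinity>" using O3[OF aD] by simp
qed (rule time_warp_ores)


lemma strongly_extends_at_SS:
  assumes f: "strongly_extends f D \<delta> t" and aD: "SApp (BR t) a \<in> D"
    and k: "\<delta> (SApp (BR t) a) = enat k"
  shows "f (enat (Suc k)) = \<delta> (SApp t (SS (SApp (BR t) a)))"
proof -
  have "\<delta> (SS (SApp (BR t) a)) = enat (Suc k)"
    using S4[OF closed_arg[OF closed_BR_SS[OF aD]] aD] k by simp
  then show ?thesis using strongly_extends_apply[OF f closed_BR_SS[OF aD]] by simp
qed

lemma radj_extends_finite:
  assumes f: "strongly_extends f D \<delta> t" and aD: "SApp (BR t) a \<in> D" and fin: "\<delta> a < \<infinity>"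
  shows "radj f (\<delta> a) = \<delta> (SApp (BR t) a)"
proof (cases "\<delta> a = 0")
  case True
  then show ?thesis using S2[OF aD] time_warp_zero[OF time_warp_radj] by simp
next
  case False
  then have pos: "0 < \<delta> a" by (simp add: zero_less_iff_neq_zero)
  have tw: "time_warp f" using strongly_extends_time_warp[OF f] .
  show ?thesis
  proof (rule radj_eqI[OF tw pos fin])
    show "f (\<delta> (SApp (BR t) a)) \<le> \<delta> a"
      using R1[OF aD] strongly_extends_apply[OF f closed_BR[OF aD]] by simp
  next
    fix s assume less: "\<delta> (SApp (BR t) a) < s"
    then obtain k where k: "\<delta> (SApp (BR t) a) = enat k" by (cases "\<delta> (SApp (BR t) a)") auto
    with less have s: "enat (Suc k) \<le> s" by (simp add: Suc_ile_eq)
    have "\<delta> a < \<delta> (SApp t (SS (SApp (BR t) a)))" using R2[OF aD pos fin] k by simp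
    also have "\<dots> = f (enat (Suc k))" using strongly_extends_at_SS[OF f aD k] by simp
    also have "\<dots> \<le> f s" using time_warp_mono[OF tw s] .
    finally show "\<delta> a < f s" .
  qed
qed

lemma radj_extends_infinity:
  assumes f: "strongly_extends f D \<delta> t" and aD: "SApp (BR t) a \<in> D" and inf: "\<delta> a = \<infinity>"
  shows "radj f (\<delta> a) = \<delta> (SApp (BR t) a)"
proof -
  let ?l = "SLast (BR t)" and ?v = "\<delta> (SApp (BR t) (SLast (BR t)))"
  have tw: "time_warp f" using strongly_extends_time_warp[OF f] .
  have lD: "SApp (BR t) ?l \<in> D" using closed_SLast_app[OF aD] .
  have upper: "radj f \<infinity> \<le> enat k" if k: "?v = enat k" for k
  proof (rule radj_infinity_le[OF tw])
    show "f (enat (Suc k)) = \<infinity>" using strongly_extends_at_SS[OF f lD k] R4[OF aD] k by simp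
  qed
  have lower: "?v \<le> radj f \<infinity>"
  proof (cases "\<delta> ?l = \<infinity>")
    case True
    then have "lastw f = \<infinity>" using R3[OF aD] strongly_extends_lastw[OF f closed_BR[OF aD]] by simp
    then have "radj f \<infinity> = \<infinity>" using lastw_radj[OF tw] lastw_eq_infinity_iff[OF time_warp_radj] by blast
    then show ?thesis by simp
  next
    case False
    then have "?v = radj f (\<delta> ?l)" using radj_extends_finite[OF f lD] by simp
    also have "\<dots> \<le> radj f \<infinity>" by (rule time_warp_mono[OF time_warp_radj]) simp
    finally show ?thesis .
  qed
  have "radj f \<infinity> = ?v" using upper lower by (cases ?v) (auto intro: antisym)
  then show ?thesis using value_at_infinity[OF aD inf] inf by simp
qed

lemma strongly_extends_BR:
  assumes f: "strongly_extends f D \<delta> t"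
  shows "strongly_extends (radj f) D \<delta> (BR t)"
proof (rule strongly_extendsI)
  fix a assume aD: "SApp (BR t) a \<in> D"
  show "radj f (\<delta> a) = \<delta> (SApp (BR t) a)"
    using radj_extends_finite[OF f aD] radj_extends_infinity[OF f aD] by (cases "\<delta> a < \<infinity>") auto
  show "lastw (radj f) = \<infinity>" if "\<delta> (SLast (BR t)) = \<infinity>"
    using lastw_radj[OF strongly_extends_time_warp[OF f]] R3[OF aD that]
      strongly_extends_lastw[OF f closed_BR[OF aD]] by simp
qed (rule time_warp_radj)

lemma ladj_extends_finite:
  assumes f: "strongly_extends f D \<delta> t" and aD: "SApp (BL t) a \<in> D" and fin: "\<delta> a < \<infinity>"
  shows "ladj f (\<delta> a) = \<delta> (SApp (BL t) a)"
proof (cases "\<delta> a = 0")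
  case True
  then show ?thesis using S2[OF aD] time_warp_zero[OF time_warp_ladj] by simp
next
  case False
  then have pos: "0 < \<delta> a" by (simp add: zero_less_iff_neq_zero)
  have tw: "time_warp f" using strongly_extends_time_warp[OF f] .
  have fx: "f (\<delta> (SApp (BL t) a)) = \<delta> (SApp t (SApp (BL t) a))"
    using strongly_extends_apply[OF f closed_BL[OF aD]] .
  show ?thesis
  proof (rule ladj_eqI[OF tw pos fin])
    show "\<delta> a \<le> f (\<delta> (SApp (BL t) a))" if "\<delta> (SApp (BL t) a) < \<infinity>"
      using \<Lambda>1[OF aD that] fx by simp
  next
    fix s assume less: "s < \<delta> (SApp (BL t) a)"
    show "f s < \<delta> a"
    proof (cases "\<delta> (SApp (BL t) a)")
      case infinity
      have "f s \<le> f \<infinity>" by (rule time_warp_mono[OF tw]) simp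
      also have "\<dots> < \<delta> a" using \<Lambda>3[OF aD fin infinity] fx infinity by simp
      finally show ?thesis .
    next
      case (enat k)
      then obtain j where j: "k = Suc j" and s: "s \<le> enat j"
        using less by (cases k; cases s) auto
      have "\<delta> (SP (SApp (BL t) a)) = enat j"
        using S3[OF closed_arg[OF closed_BL_SP[OF aD]] aD] enat j by simp
      then have "f (enat j) = \<delta> (SApp t (SP (SApp (BL t) a)))"
        using strongly_extends_apply[OF f closed_BL_SP[OF aD]] by simp
      also have "\<dots> < \<delta> a" using \<Lambda>2[OF aD pos fin] enat by simp
      finally show ?thesis using time_warp_mono[OF tw s] by (rule le_less_trans[rotated])
    qed
  qed
qed

lemma ladj_extends_infinity:
  assumes f: "strongly_extends f D \<delta> t" and aD: "SApp (BL t) a \<in> D" and inf: "\<delta> a = \<infinity>"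
  shows "ladj f (\<delta> a) = \<delta> (SApp (BL t) a)"
proof -
  let ?l = "SLast (BL t)" and ?v = "\<delta> (SApp (BL t) (SLast (BL t)))"
  have tw: "time_warp f" using strongly_extends_time_warp[OF f] .
  have lD: "SApp (BL t) ?l \<in> D" using closed_SLast_app[OF aD] .
  have upper: "ladj f \<infinity> \<le> enat k" if k: "?v = enat k" for k
  proof -
    have "f (enat k) = \<infinity>"
      using strongly_extends_apply[OF f closed_BL[OF lD]] \<Lambda>5[OF aD] k by simp
    then show ?thesis using ladj_apply_le[of f "enat k"] by simp
  qed
  have lower: "?v \<le> ladj f \<infinity>"
  proof (cases "\<delta> ?l = \<infinity>")
    case True
    then have "lastw f = \<infinity>" using \<Lambda>4[OF aD] strongly_extends_lastw[OF f closed_BL[OF aD]] by simp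
    then have "ladj f \<infinity> = \<infinity>" using lastw_ladj[OF tw] lastw_eq_infinity_iff[OF time_warp_ladj] by blast
    then show ?thesis by simp
  next
    case False
    then have "?v = ladj f (\<delta> ?l)" using ladj_extends_finite[OF f lD] by simp
    also have "\<dots> \<le> ladj f \<infinity>" by (rule time_warp_mono[OF time_warp_ladj]) simp
    finally show ?thesis .
  qed
  have "ladj f \<infinity> = ?v" using upper lower by (cases ?v) (auto intro: antisym)
  then show ?thesis using value_at_infinity[OF aD inf] inf by simp
qed

lemma strongly_extends_BL:
  assumes f: "strongly_extends f D \<delta> t"
  shows "strongly_extends (ladj f) D \<delta> (BL t)"
proof (rule strongly_extendsI)
  fix a assume aD: "SApp (BL t) a \<in> D"
  show "ladj f (\<delta> a) = \<delta> (SApp (BL t) a)"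
    using ladj_extends_finite[OF f aD] ladj_extends_infinity[OF f aD] by (cases "\<delta> a < \<infinity>") auto
  show "lastw (ladj f) = \<infinity>" if "\<delta> (SLast (BL t)) = \<infinity>"
    using lastw_ladj[OF strongly_extends_time_warp[OF f]] \<Lambda>4[OF aD that]
      strongly_extends_lastw[OF f closed_BL[OF aD]] by simp
qed (rule time_warp_ladj)

lemma strongly_extends_eval:
  assumes "\<And>x. strongly_extends (\<theta> x) D \<delta> (BVar x)"
  shows "strongly_extends (eval \<theta> t) D \<delta> t"
  by (induction t) (simp_all only: eval.simps assms strongly_extends_BComp strongly_extends_BO
      strongly_extends_BL strongly_extends_BR strongly_extends_BId strongly_extends_BBot)

end

theorem lemma3p17:
  fixes D :: "('k, 'v) sample set"
    and \<delta> :: "('k, 'v) sample \<Rightarrow> enat"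
    and \<theta> :: "'v \<Rightarrow> (enat \<Rightarrow> enat)"
    and t :: "'v bterm"
  assumes "saturated D"
    and "\<forall>x. \<theta> x \<in> W"
    and "diagram D \<delta>"
    and "\<forall>x. strongly_extends (\<theta> x) D \<delta> (BVar x)"
  shows "strongly_extends (eval \<theta> t) D \<delta> t"
proof -
  interpret saturated_diagram D \<delta> using assms(1,3) by unfold_locales
  show ?thesis using strongly_extends_eval assms(4) by blast
qed

end
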